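(* Let $\varepsilon>0$, $\delta\in(0,1)$, $\Delta>0$, and let $v$ be a real-valued function on datasets with sensitivity $\Delta$, i.e. $|v(D)-v(D')|\le\Delta$ for all neighboring datasets $D,D'$. Let $q_\delta$ denote the absolute value of the $\delta$-quantile of the Laplace distribution $\mathrm{Lap}(\Delta/\varepsilon)$, and set $\tau:=\Delta+q_\delta$. Consider the PositiveLaplaceMechanism which, on dataset $D$, samples $\eta\sim\mathrm{Lap}(\Delta/\varepsilon)$, sets $\tilde v:=v(D)+\tau+\eta$, and outputs $\max(v(D),\tilde v)$. Then this mechanism is $(\varepsilon,\delta)$-differentially private.
   Context: $\mathrm{Lap}(b)$ is the Laplace distribution with mean $0$ and scale $b$, density $\frac{1}{2b}e^{-|x|/b}$. The $\phi$-quantile of a distribution is the value $x$ with $\Pr[X\le x]=\phi$. Two datasets are neighboring if they differ by replacing the contribution of one individual. A randomized algorithm $M$ is $(\varepsilon,\delta)$-differentially private if for every pair of neighboring datasets $D,D'$ and every measurable set $S$, $\Pr[M(D)\in S]\le e^{\varepsilon}\Pr[M(D')\in S]+\delta$ and symmetrically with $D,D'$ swapped. *)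

theory Defs
  imports "HOL-Probability.Probability"
begin

definition laplace :: "real \<Rightarrow> real measure" where
  "laplace b = density lborel (\<lambda>x. ennreal (exp (- \<bar>x\<bar> / b) / (2 * b)))"

definition quantile :: "real measure \<Rightarrow> real \<Rightarrow> real" where
  "quantile P \<phi> = (THE x. measure P {..x} = \<phi>)"

definition differentially_private ::
  "('d \<Rightarrow> 'd \<Rightarrow> bool) \<Rightarrow> ('d \<Rightarrow> real measure) \<Rightarrow> real \<Rightarrow> real \<Rightarrow> bool" where
  "differentially_private nbr M \<epsilon> \<delta> \<longleftrightarrow>
     (\<forall>D D'. nbr D D' \<longrightarrow> (\<forall>S \<in> sets borel.
        measure (M D) S \<le> exp \<epsilon> * measure (M D') S + \<delta> \<and>
        measure (M D') S \<le> exp \<epsilon> * measure (M D) S + \<delta>))"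

definition positive_laplace_mechanism ::
  "('d \<Rightarrow> real) \<Rightarrow> real \<Rightarrow> real \<Rightarrow> real \<Rightarrow> 'd \<Rightarrow> real measure" where
  "positive_laplace_mechanism v \<Delta> \<epsilon> \<delta> D =
     (let b = \<Delta> / \<epsilon>;
          q = \<bar>quantile (laplace b) \<delta>\<bar>;
          \<tau> = \<Delta> + q
      in distr (laplace b) borel (\<lambda>\<eta>. max (v D) (v D + \<tau> + \<eta>)))"

end

theory Submission
  imports Defs "HOL-Real_Asymp.Real_Asymp"
begin

text \<open>Write u = v D, u' = v D' and m = max u u'. The output max u (u + \<tau> + \<eta>) can lie
  in S only if u + \<tau> + \<eta> \<le> m, which forces \<eta> \<le> \<Delta> - \<tau> = -q_\<delta> and so has probability
  at most \<delta>, or if u + \<tau> + \<eta> \<in> S \<inter> (m, \<infinity>). Shifting the Laplace noise by u' - u, where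
  \<bar>u' - u\<bar> \<le> \<Delta> = \<epsilon> * (\<Delta> / \<epsilon>), costs at most a factor exp \<epsilon> and turns the second event
  into u' + \<tau> + \<eta> \<in> S \<inter> (m, \<infinity>), on which the output for D' is u' + \<tau> + \<eta> itself.\<close>

definition laplace_density :: "real \<Rightarrow> real \<Rightarrow> real" where
  "laplace_density b x = exp (- \<bar>x\<bar> / b) / (2 * b)"

lemma borel_measurable_laplace_density [measurable]: "laplace_density b \<in> borel_measurable borel"
  unfolding laplace_density_def by measurable

lemma sets_laplace [simp, measurable_cong]: "sets (laplace b) = sets borel"
  by (simp add: laplace_def)

lemma space_laplace [simp]: "space (laplace b) = UNIV"
  by (simp add: laplace_def)

lemma emeasure_laplace:
  "A \<in> sets borel \<Longrightarrow>
     emeasure (laplace b) A = (\<integral>\<^sup>+x. ennreal (laplace_density b x) * indicator A x \<partial>lborel)"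
  by (simp add: laplace_def laplace_density_def emeasure_density)

lemma emeasure_laplace_reflect:
  assumes [measurable]: "A \<in> sets borel"
  shows "emeasure (laplace b) (uminus -` A) = emeasure (laplace b) A"
proof -
  have "uminus -` A \<in> sets borel"
    by (rule measurable_sets_borel[OF _ assms]) measurable
  then show ?thesis
    by (simp add: emeasure_laplace nn_integral_real_affine[where c="-1" and t=0
          and f="\<lambda>x. ennreal (laplace_density b x) * indicator (uminus -` A) x"])
       (auto simp: laplace_density_def intro!: nn_integral_cong split: split_indicator)
qed

lemma emeasure_laplace_atLeast:
  assumes b: "b > 0" and a: "a \<ge> 0"
  shows "emeasure (laplace b) {a..} = ennreal (exp (- a / b) / 2)"
proof -
  have "emeasure (laplace b) {a..} = (\<integral>\<^sup>+x. ennreal (exp (- x / b) / (2 * b)) * indicator {a..} x \<partial>lborel)"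
    using a by (auto simp: emeasure_laplace laplace_density_def intro!: nn_integral_cong split: split_indicator)
  also have "\<dots> = ennreal (0 - (- exp (- a / b) / 2))"
  proof (rule nn_integral_FTC_atLeast)
    fix x
    show "((\<lambda>x. - exp (- x / b) / 2) has_real_derivative exp (- x / b) / (2 * b)) (at x)"
      using b by (auto intro!: derivative_eq_intros simp: field_simps)
    show "0 \<le> exp (- x / b) / (2 * b)"
      using b by simp
  next
    show "((\<lambda>x. - exp (- x / b) / 2) \<longlongrightarrow> 0) at_top"
      using b by real_asymp
  qed measurable
  finally show ?thesis
    by simp
qed

lemma emeasure_laplace_greaterThan:
  assumes "b > 0" and "a \<ge> 0"
  shows "emeasure (laplace b) {a<..} = ennreal (exp (- a / b) / 2)"
proof -
  have "emeasure (laplace b) {a<..} = emeasure (laplace b) {a..}"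
    unfolding emeasure_laplace[OF borel_open[OF open_greaterThan]] emeasure_laplace[OF borel_closed[OF closed_atLeast]]
    by (intro nn_integral_cong_AE eventually_mono[OF AE_lborel_singleton[of a]]) (auto split: split_indicator)
  with assms show ?thesis
    by (simp add: emeasure_laplace_atLeast)
qed

lemma emeasure_laplace_atMost:
  assumes "b > 0" and "x \<le> 0"
  shows "emeasure (laplace b) {..x} = ennreal (exp (x / b) / 2)"
proof -
  have "{..x} = uminus -` {-x..}"
    by auto
  with assms show ?thesis
    by (simp add: emeasure_laplace_reflect emeasure_laplace_atLeast)
qed

lemma prob_space_laplace:
  assumes b: "b > 0"
  shows "prob_space (laplace b)"
proof
  have "emeasure (laplace b) ({..0} \<union> {0<..}) = emeasure (laplace b) {..0} + emeasure (laplace b) {0<..}"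
    by (rule plus_emeasure[symmetric]) auto
  moreover have "{..0::real} \<union> {0<..} = space (laplace b)"
    by auto
  ultimately have "emeasure (laplace b) (space (laplace b)) = emeasure (laplace b) {..0} + emeasure (laplace b) {0<..}"
    by simp
  also have "\<dots> = ennreal (1 / 2) + ennreal (1 / 2)"
    using b by (simp add: emeasure_laplace_atMost emeasure_laplace_greaterThan)
  also have "\<dots> = 1"
    by (subst ennreal_plus[symmetric]) auto
  finally show "emeasure (laplace b) (space (laplace b)) = 1" .
qed

definition laplace_cdf :: "real \<Rightarrow> real \<Rightarrow> real" where
  "laplace_cdf b x = (if x \<le> 0 then exp (x / b) / 2 else 1 - exp (- x / b) / 2)"

lemma measure_laplace_atMost:
  assumes b: "b > 0"
  shows "measure (laplace b) {..x} = laplace_cdf b x"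
proof -
  interpret prob_space "laplace b"
    using b by (rule prob_space_laplace)
  show ?thesis
  proof (cases "x \<le> 0")
    case True
    then show ?thesis
      using b by (simp add: measure_def emeasure_laplace_atMost laplace_cdf_def)
  next
    case False
    have "prob (space (laplace b) - {x<..}) = 1 - prob {x<..}"
      by (rule prob_compl) simp
    moreover have "space (laplace b) - {x<..} = {..x}"
      by auto
    ultimately have "prob {..x} = 1 - prob {x<..}"
      by simp
    then show ?thesis
      using b False by (simp add: measure_def emeasure_laplace_greaterThan laplace_cdf_def)
  qed
qed

lemma strict_mono_laplace_cdf:
  assumes b: "b > 0"
  shows "strict_mono (laplace_cdf b)"
proof (rule strict_monoI)
  fix x y :: real
  assume "x < y"
  consider "y \<le> 0" | "x \<le> 0" "y > 0" | "x > 0"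
    by linarith
  then show "laplace_cdf b x < laplace_cdf b y"
  proof cases
    case 1
    then show ?thesis
      using \<open>x < y\<close> b by (simp add: laplace_cdf_def divide_strict_right_mono)
  next
    case 2
    then have "laplace_cdf b x \<le> 1 / 2" and "1 / 2 < laplace_cdf b y"
      using b by (simp_all add: laplace_cdf_def divide_nonpos_pos)
    then show ?thesis
      by linarith
  next
    case 3
    then show ?thesis
      using \<open>x < y\<close> b by (simp add: laplace_cdf_def divide_strict_right_mono)
  qed
qed

lemma ex_laplace_cdf_eq:
  assumes "b > 0" and "0 < \<delta>" "\<delta> < 1"
  shows "\<exists>x. laplace_cdf b x = \<delta>"
proof (cases "\<delta> \<le> 1/2")
  case True
  have "b * ln (2 * \<delta>) \<le> 0"
    using True assms by (simp add: mult_nonneg_nonpos)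
  then have "laplace_cdf b (b * ln (2 * \<delta>)) = \<delta>"
    using assms by (simp add: laplace_cdf_def)
  then show ?thesis ..
next
  case False
  have "- b * ln (2 * (1 - \<delta>)) > 0"
    using False assms by (simp add: mult_pos_neg)
  then have "laplace_cdf b (- b * ln (2 * (1 - \<delta>))) = \<delta>"
    using assms by (simp add: laplace_cdf_def field_simps)
  then show ?thesis ..
qed

lemma measure_laplace_atMost_quantile:
  assumes b: "b > 0" and "0 < \<delta>" "\<delta> < 1"
  shows "measure (laplace b) {..quantile (laplace b) \<delta>} = \<delta>"
proof -
  obtain x where x: "laplace_cdf b x = \<delta>"
    using ex_laplace_cdf_eq[OF assms] ..
  have "quantile (laplace b) \<delta> = x"
    unfolding quantile_def measure_laplace_atMost[OF b]
    using x strict_mono_eq[OF strict_mono_laplace_cdf[OF b]] by (intro the_equality) auto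
  with x show ?thesis
    by (simp add: measure_laplace_atMost[OF b])
qed

lemma laplace_density_le_shift:
  assumes b: "b > 0" and d: "\<bar>d\<bar> \<le> e * b"
  shows "laplace_density b y \<le> exp e * laplace_density b (y - d)"
proof -
  have "- \<bar>y\<bar> / b \<le> e + - \<bar>y - d\<bar> / b"
    using b d by (simp add: field_simps)
  then have "exp (- \<bar>y\<bar> / b) \<le> exp e * exp (- \<bar>y - d\<bar> / b)"
    by (simp flip: exp_add)
  then show ?thesis
    using b by (simp add: laplace_density_def divide_right_mono)
qed

lemma measure_laplace_le_shift:
  assumes b: "b > 0" and [measurable]: "A \<in> sets borel" and d: "\<bar>d\<bar> \<le> e * b"
  shows "measure (laplace b) A \<le> exp e * measure (laplace b) {\<eta>. \<eta> + d \<in> A}"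
proof -
  interpret prob_space "laplace b"
    using b by (rule prob_space_laplace)
  have "emeasure (laplace b) A = (\<integral>\<^sup>+y. ennreal (laplace_density b y) * indicator A y \<partial>lborel)"
    by (simp add: emeasure_laplace)
  also have "\<dots> \<le> (\<integral>\<^sup>+y. ennreal (exp e) * (ennreal (laplace_density b (y - d)) * indicator A y) \<partial>lborel)"
    using laplace_density_le_shift[OF b d]
    by (intro nn_integral_mono) (auto simp: ennreal_mult'[symmetric] split: split_indicator intro!: ennreal_leI)
  also have "\<dots> = ennreal (exp e) * (\<integral>\<^sup>+y. ennreal (laplace_density b (y - d)) * indicator A y \<partial>lborel)"
    by (intro nn_integral_cmult) measurable
  also have "(\<integral>\<^sup>+y. ennreal (laplace_density b (y - d)) * indicator A y \<partial>lborel)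
      = (\<integral>\<^sup>+y. ennreal (laplace_density b y) * indicator {\<eta>. \<eta> + d \<in> A} y \<partial>lborel)"
    by (subst nn_integral_real_affine[where c=1 and t=d])
       (auto intro!: nn_integral_cong split: split_indicator simp: add.commute)
  also have "\<dots> = emeasure (laplace b) {\<eta>. \<eta> + d \<in> A}"
    by (simp add: emeasure_laplace)
  finally have "ennreal (prob A) \<le> ennreal (exp e * prob {\<eta>. \<eta> + d \<in> A})"
    by (simp add: emeasure_eq_measure ennreal_mult')
  then show ?thesis
    by simp
qed

lemma measure_distr_max_shift_le:
  fixes N :: "real measure"
  assumes "prob_space N" and sets_N [measurable_cong]: "sets N = sets borel"
    and shift: "\<And>A d. A \<in> sets borel \<Longrightarrow> \<bar>d\<bar> \<le> \<Delta> \<Longrightarrow> measure N A \<le> exp \<epsilon> * measure N {\<eta>. \<eta> + d \<in> A}"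
    and tail: "measure N {..\<Delta> - \<tau>} \<le> \<delta>"
    and u: "\<bar>u - u'\<bar> \<le> \<Delta>" and [measurable]: "S \<in> sets borel"
  shows "measure (distr N borel (\<lambda>\<eta>. max u (u + \<tau> + \<eta>))) S
    \<le> exp \<epsilon> * measure (distr N borel (\<lambda>\<eta>. max u' (u' + \<tau> + \<eta>))) S + \<delta>"
proof -
  interpret prob_space N
    by fact
  have events: "X \<in> events" if "X \<in> sets borel" for X
    using that sets_N by simp
  have space_N: "space N = UNIV"
    using sets_eq_imp_space_eq[OF sets_N] by simp
  have release: "measure (distr N borel (\<lambda>\<eta>. max w (w + \<tau> + \<eta>))) S = prob {\<eta>. max w (w + \<tau> + \<eta>) \<in> S}" for w
    by (subst measure_distr) (auto simp: vimage_def Int_def space_N)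
  define m where "m = max u u'"
  define B where "B = {\<eta>. u + \<tau> + \<eta> \<in> S \<inter> {m<..}}"
  have [measurable]: "B \<in> sets borel"
    unfolding B_def by measurable
  have "{\<eta>. max u (u + \<tau> + \<eta>) \<in> S} \<subseteq> {..\<Delta> - \<tau>} \<union> B"
    using u by (auto simp: B_def m_def)
  then have "prob {\<eta>. max u (u + \<tau> + \<eta>) \<in> S} \<le> prob ({..\<Delta> - \<tau>} \<union> B)"
    by (intro finite_measure_mono events) auto
  also have "\<dots> \<le> prob {..\<Delta> - \<tau>} + prob B"
    by (intro measure_subadditive events) auto
  also have "prob B \<le> exp \<epsilon> * prob {\<eta>. \<eta> + (u' - u) \<in> B}"
    using u by (intro shift) auto
  also have "prob {\<eta>. \<eta> + (u' - u) \<in> B} \<le> prob {\<eta>. max u' (u' + \<tau> + \<eta>) \<in> S}"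
    by (intro finite_measure_mono events) (auto simp: B_def m_def ac_simps)
  finally show ?thesis
    using tail by (simp add: release)
qed

theorem theoremD1:
  fixes v :: "'d \<Rightarrow> real" and nbr :: "'d \<Rightarrow> 'd \<Rightarrow> bool"
    and \<epsilon> \<delta> \<Delta> :: real
  assumes "\<epsilon> > 0" and "0 < \<delta>" and "\<delta> < 1" and "\<Delta> > 0"
    and sens: "\<And>D D'. nbr D D' \<Longrightarrow> \<bar>v D - v D'\<bar> \<le> \<Delta>"
  shows "differentially_private nbr (positive_laplace_mechanism v \<Delta> \<epsilon> \<delta>) \<epsilon> \<delta>"
proof -
  define b where "b = \<Delta> / \<epsilon>"
  define \<tau> where "\<tau> = \<Delta> + \<bar>quantile (laplace b) \<delta>\<bar>"
  have b: "b > 0"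
    using assms by (simp add: b_def)
  have shift: "measure (laplace b) A \<le> exp \<epsilon> * measure (laplace b) {\<eta>. \<eta> + d \<in> A}"
    if "A \<in> sets borel" "\<bar>d\<bar> \<le> \<Delta>" for A d
    using that assms by (intro measure_laplace_le_shift b) (simp_all add: b_def)
  interpret prob_space "laplace b"
    using b by (rule prob_space_laplace)
  have "prob {..\<Delta> - \<tau>} \<le> prob {..quantile (laplace b) \<delta>}"
    by (intro finite_measure_mono) (auto simp: \<tau>_def)
  then have tail: "prob {..\<Delta> - \<tau>} \<le> \<delta>"
    using measure_laplace_atMost_quantile[OF b] assms by simp
  have release_le: "measure (distr (laplace b) borel (\<lambda>\<eta>. max u (u + \<tau> + \<eta>))) S
      \<le> exp \<epsilon> * measure (distr (laplace b) borel (\<lambda>\<eta>. max u' (u' + \<tau> + \<eta>))) S + \<delta>"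
    if "\<bar>u - u'\<bar> \<le> \<Delta>" "S \<in> sets borel" for u u' S
    using measure_distr_max_shift_le[OF prob_space_axioms sets_laplace shift tail that] .
  have sens_sym: "\<bar>v D' - v D\<bar> \<le> \<Delta>" if "nbr D D'" for D D'
    using sens[OF that] by simp
  show ?thesis
    unfolding differentially_private_def positive_laplace_mechanism_def Let_def
      b_def[symmetric] \<tau>_def[symmetric]
    by (auto intro: release_le sens sens_sym)
qed

end
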